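(* Let $\Lambda$ be a row-finite $k$-graph with no sources and $R$ a commutative ring with $1$. Let $\mu,\nu\in\Lambda$ with $s(\mu)=s(\nu)$ and $r\in R\setminus\{0\}$ such that $r\,s_\mu s_{\nu^*}\in\mathcal{D}'$. Then $s_\mu s_{\mu^*}=s_\nu s_{\nu^*}$.
   Context: A $k$-graph is a countable category $\Lambda$ (vertices $\Lambda^0$, paths, maps $r,s$) with a degree functor $d:\Lambda\to\mathbb{N}^k$ satisfying unique factorization: if $d(\lambda)=m+n$ there are unique $\mu,\nu$ with $s(\mu)=r(\nu)$, $d(\mu)=m,d(\nu)=n$, $\lambda=\mu\nu$. $v\Lambda^n$ denotes paths of degree $n$ with range $v$; row-finite with no sources means each $v\Lambda^n$ is finite and nonempty. ${\rm KP}_R(\Lambda)$ is the universal $R$-algebra generated by $p_v$ ($v\in\Lambda^0$), $s_\lambda,s_{\lambda^*}$ ($d(\lambda)\ne0$) with relations (KP1) $p_v$ mutually orthogonal idempotents; (KP2) $s_\lambda s_\mu=s_{\lambda\mu}$, $s_{\mu^*}s_{\lambda^*}=s_{(\lambda\mu)^*}$, $p_{r(\lambda)}s_\lambda=s_\lambda=s_\lambda p_{s(\lambda)}$, $p_{s(\lambda)}s_{\lambda^*}=s_{\lambda^*}=s_{\lambda^*}p_{r(\lambda)}$ when $r(\mu)=s(\lambda)$; (KP3) $s_{\lambda^*}s_\mu=\delta_{\lambda,\mu}p_{s(\lambda)}$ when $d(\lambda)=d(\mu)$; (KP4) $p_v=\sum_{\lambda\in v\Lambda^n}s_\lambda s_{\lambda^*}$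 for $n\ne0$. Convention $s_v=s_{v^*}=p_v$. $\mathcal{D}$ is the $R$-subalgebra generated by $\{s_\mu s_{\mu^*}:\mu\in\Lambda\}$, and $\mathcal{D}'=\{a\in{\rm KP}_R(\Lambda): ad=da\ \forall d\in\mathcal{D}\}$. *)

theory Defs
  imports "HOL-Library.Countable_Set"
begin

text \<open>A k-graph is modelled as a small category whose morphisms (paths) form a
set of elements of some type 'p; the objects (vertices) are identified with the
identity morphisms.  rng and src give the range and source vertex,
cmp is composition (cmp lam mu is defined when src lam = rng mu),
and deg is the degree functor into N^k, an element of N^k being represented as a
function nat => nat vanishing at all i >= k.\<close>

record 'p kgraph =
  paths :: "'p set"
  rng   :: "'p \<Rightarrow> 'p"
  src   :: "'p \<Rightarrow> 'p"
  cmp   :: "'p \<Rightarrow> 'p \<Rightarrow> 'p"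
  deg   :: "'p \<Rightarrow> nat \<Rightarrow> nat"

definition vertices :: "'p kgraph \<Rightarrow> 'p set" where
  "vertices G = {v \<in> paths G. rng G v = v}"

definition in_Nk :: "nat \<Rightarrow> (nat \<Rightarrow> nat) \<Rightarrow> bool" where
  "in_Nk k m \<longleftrightarrow> (\<forall>i\<ge>k. m i = 0)"

definition is_kgraph :: "nat \<Rightarrow> 'p kgraph \<Rightarrow> bool" where
  "is_kgraph k G \<longleftrightarrow>
     countable (paths G) \<and>
     \<comment> \<open>category structure\<close>
     (\<forall>l\<in>paths G. rng G l \<in> paths G \<and> src G l \<in> paths G) \<and>
     (\<forall>l\<in>paths G. rng G (rng G l) = rng G l \<and> src G (rng G l) = rng G l \<and>
                   rng G (src G l) = src G l \<and> src G (src G l) = src G l) \<and>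
     (\<forall>l\<in>paths G. cmp G (rng G l) l = l \<and> cmp G l (src G l) = l) \<and>
     (\<forall>l\<in>paths G. \<forall>m\<in>paths G. src G l = rng G m \<longrightarrow>
         cmp G l m \<in> paths G \<and> rng G (cmp G l m) = rng G l \<and> src G (cmp G l m) = src G m) \<and>
     (\<forall>l\<in>paths G. \<forall>m\<in>paths G. \<forall>n\<in>paths G. src G l = rng G m \<longrightarrow> src G m = rng G n \<longrightarrow>
         cmp G (cmp G l m) n = cmp G l (cmp G m n)) \<and>
     \<comment> \<open>degree functor into N^k\<close>
     (\<forall>l\<in>paths G. in_Nk k (deg G l)) \<and>
     (\<forall>l\<in>paths G. \<forall>m\<in>paths G. src G l = rng G m \<longrightarrow>
         deg G (cmp G l m) = (\<lambda>i. deg G l i + deg G m i)) \<and>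
     \<comment> \<open>unique factorisation property\<close>
     (\<forall>l\<in>paths G. \<forall>m n. deg G l = (\<lambda>i. m i + n i) \<longrightarrow>
         (\<exists>!(a, b). a \<in> paths G \<and> b \<in> paths G \<and> src G a = rng G b \<and>
                    deg G a = m \<and> deg G b = n \<and> cmp G a b = l))"

definition vLn :: "'p kgraph \<Rightarrow> 'p \<Rightarrow> (nat \<Rightarrow> nat) \<Rightarrow> 'p set" where
  "vLn G v n = {l \<in> paths G. rng G l = v \<and> deg G l = n}"

definition row_finite_no_sources :: "nat \<Rightarrow> 'p kgraph \<Rightarrow> bool" where
  "row_finite_no_sources k G \<longleftrightarrow>
     (\<forall>v\<in>vertices G. \<forall>n. in_Nk k n \<longrightarrow> finite (vLn G v n) \<and> vLn G v n \<noteq> {})"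

text \<open>Generators not belonging to the presentation
(p_v for non-vertices, s_lam / s_lam* for lam not a path or of degree 0) are
set equal to 0 by a relation, so they do not change the algebra.\<close>

datatype 'p kpgen = Pg 'p | Sg 'p | Ssg 'p

datatype ('p, 'r) kpt =
    Gen "'p kpgen"
  | Zero
  | Add "('p, 'r) kpt" "('p, 'r) kpt"
  | Neg "('p, 'r) kpt"
  | Mul "('p, 'r) kpt" "('p, 'r) kpt"
  | Smul 'r "('p, 'r) kpt"

text \<open>s_lam and s_lam*, with the convention s_v = s_v* = p_v for vertices
(paths of degree 0).\<close>
definition tS :: "'p kgraph \<Rightarrow> 'p \<Rightarrow> ('p, 'r) kpt" where
  "tS G l = (if deg G l = (\<lambda>i. 0) then Gen (Pg l) else Gen (Sg l))"

definition tSs :: "'p kgraph \<Rightarrow> 'p \<Rightarrow> ('p, 'r) kpt" where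
  "tSs G l = (if deg G l = (\<lambda>i. 0) then Gen (Pg l) else Gen (Ssg l))"

definition tP :: "'p \<Rightarrow> ('p, 'r) kpt" where
  "tP v = Gen (Pg v)"

definition valid_gen :: "'p kgraph \<Rightarrow> 'p kpgen \<Rightarrow> bool" where
  "valid_gen G g = (case g of
      Pg v \<Rightarrow> v \<in> vertices G
    | Sg l \<Rightarrow> l \<in> paths G \<and> deg G l \<noteq> (\<lambda>i. 0)
    | Ssg l \<Rightarrow> l \<in> paths G \<and> deg G l \<noteq> (\<lambda>i. 0))"

definition tsum :: "('p, 'r) kpt list \<Rightarrow> ('p, 'r) kpt" where
  "tsum xs = foldr Add xs Zero"

text \<open>kp_eq k G a b means: a and b are equal in KP_R(Lambda), i.e. the least
congruence on terms containing the axioms of an associative (non-unital)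
algebra over the commutative ring 'r and the relations (KP1)--(KP4).\<close>

inductive kp_eq :: "nat \<Rightarrow> 'p kgraph \<Rightarrow> ('p, 'r::comm_ring_1) kpt \<Rightarrow> ('p, 'r) kpt \<Rightarrow> bool"
  for k :: nat and G :: "'p kgraph" where
  refl: "kp_eq k G a a"
| sym: "kp_eq k G a b \<Longrightarrow> kp_eq k G b a"
| trans: "kp_eq k G a b \<Longrightarrow> kp_eq k G b c \<Longrightarrow> kp_eq k G a c"
| cong_add: "kp_eq k G a a' \<Longrightarrow> kp_eq k G b b' \<Longrightarrow> kp_eq k G (Add a b) (Add a' b')"
| cong_neg: "kp_eq k G a a' \<Longrightarrow> kp_eq k G (Neg a) (Neg a')"
| cong_mul: "kp_eq k G a a' \<Longrightarrow> kp_eq k G b b' \<Longrightarrow> kp_eq k G (Mul a b) (Mul a' b')"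
| cong_smul: "kp_eq k G a a' \<Longrightarrow> kp_eq k G (Smul c a) (Smul c a')"
| add_assoc: "kp_eq k G (Add (Add a b) c) (Add a (Add b c))"
| add_comm: "kp_eq k G (Add a b) (Add b a)"
| add_zero: "kp_eq k G (Add a Zero) a"
| add_neg: "kp_eq k G (Add a (Neg a)) Zero"
| mul_assoc: "kp_eq k G (Mul (Mul a b) c) (Mul a (Mul b c))"
| distl: "kp_eq k G (Mul a (Add b c)) (Add (Mul a b) (Mul a c))"
| distr: "kp_eq k G (Mul (Add a b) c) (Add (Mul a c) (Mul b c))"
| smul_add: "kp_eq k G (Smul r (Add a b)) (Add (Smul r a) (Smul r b))"
| smul_radd: "kp_eq k G (Smul (r + r') a) (Add (Smul r a) (Smul r' a))"
| smul_mult: "kp_eq k G (Smul (r * r') a) (Smul r (Smul r' a))"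
| smul_one: "kp_eq k G (Smul 1 a) a"
| smul_mul_left: "kp_eq k G (Smul r (Mul a b)) (Mul (Smul r a) b)"
| smul_mul_right: "kp_eq k G (Smul r (Mul a b)) (Mul a (Smul r b))"
| invalid: "\<not> valid_gen G g \<Longrightarrow> kp_eq k G (Gen g) Zero"
| KP1a: "v \<in> vertices G \<Longrightarrow> kp_eq k G (Mul (tP v) (tP v)) (tP v)"
| KP1b: "v \<in> vertices G \<Longrightarrow> w \<in> vertices G \<Longrightarrow> v \<noteq> w \<Longrightarrow> kp_eq k G (Mul (tP v) (tP w)) Zero"
| KP2a: "l \<in> paths G \<Longrightarrow> m \<in> paths G \<Longrightarrow> rng G m = src G l \<Longrightarrow>
         kp_eq k G (Mul (tS G l) (tS G m)) (tS G (cmp G l m))"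
| KP2b: "l \<in> paths G \<Longrightarrow> m \<in> paths G \<Longrightarrow> rng G m = src G l \<Longrightarrow>
         kp_eq k G (Mul (tSs G m) (tSs G l)) (tSs G (cmp G l m))"
| KP2c: "l \<in> paths G \<Longrightarrow> kp_eq k G (Mul (tP (rng G l)) (tS G l)) (tS G l)"
| KP2d: "l \<in> paths G \<Longrightarrow> kp_eq k G (Mul (tS G l) (tP (src G l))) (tS G l)"
| KP2e: "l \<in> paths G \<Longrightarrow> kp_eq k G (Mul (tP (src G l)) (tSs G l)) (tSs G l)"
| KP2f: "l \<in> paths G \<Longrightarrow> kp_eq k G (Mul (tSs G l) (tP (rng G l))) (tSs G l)"
| KP3: "l \<in> paths G \<Longrightarrow> m \<in> paths G \<Longrightarrow> deg G l = deg G m \<Longrightarrow>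
        kp_eq k G (Mul (tSs G l) (tS G m)) (if l = m then tP (src G l) else Zero)"
  \<comment> \<open>(KP4): the (finite) sum over v Lambda^n, written via any enumeration\<close>
| KP4: "v \<in> vertices G \<Longrightarrow> in_Nk k n \<Longrightarrow> n \<noteq> (\<lambda>i. 0) \<Longrightarrow>
        distinct ls \<Longrightarrow> set ls = vLn G v n \<Longrightarrow>
        kp_eq k G (tP v) (tsum (map (\<lambda>l. Mul (tS G l) (tSs G l)) ls))"

text \<open>The (term representatives of the) R-subalgebra D generated by the
s_mu s_mu*.\<close>
inductive_set kp_D :: "nat \<Rightarrow> 'p kgraph \<Rightarrow> ('p, 'r::comm_ring_1) kpt set"
  for k :: nat and G :: "'p kgraph" where
  gen: "m \<in> paths G \<Longrightarrow> Mul (tS G m) (tSs G m) \<in> kp_D k G"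
| zero: "Zero \<in> kp_D k G"
| add: "a \<in> kp_D k G \<Longrightarrow> b \<in> kp_D k G \<Longrightarrow> Add a b \<in> kp_D k G"
| neg: "a \<in> kp_D k G \<Longrightarrow> Neg a \<in> kp_D k G"
| mul: "a \<in> kp_D k G \<Longrightarrow> b \<in> kp_D k G \<Longrightarrow> Mul a b \<in> kp_D k G"
| smul: "a \<in> kp_D k G \<Longrightarrow> Smul c a \<in> kp_D k G"

definition kp_in_D' :: "nat \<Rightarrow> 'p kgraph \<Rightarrow> ('p, 'r::comm_ring_1) kpt \<Rightarrow> bool" where
  "kp_in_D' k G a \<longleftrightarrow> (\<forall>d\<in>kp_D k G. kp_eq k G (Mul a d) (Mul d a))"

end

theory Submission
  imports Defs "HOL-Library.Function_Algebras"
begin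

text \<open>Refine both projections to the common degree \<open>m = d(\<mu>) \<squnion> d(\<nu>)\<close>: by (KP4),
  \<open>s\<^sub>\<mu>s\<^sub>\<mu>\<^sup>* = \<Sum> s\<^sub>\<mu>\<^sub>\<alpha> s\<^sub>\<mu>\<^sub>\<alpha>\<^sup>*\<close> over \<open>\<alpha> \<in> s(\<mu>)\<Lambda>\<^bsup>m - d(\<mu>)\<^esup>\<close>, and likewise for \<open>\<nu>\<close>,
  so it suffices that the paths \<open>\<mu>\<alpha>\<close> of degree \<open>m\<close> are exactly the paths \<open>\<nu>\<beta>\<close>.
  If \<open>\<mu>\<alpha>\<close> did not begin with \<open>\<nu>\<close>, then \<open>s\<^sub>\<nu>\<^sup>* s\<^sub>\<mu>\<^sub>\<alpha> = 0\<close>, and commuting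
  \<open>x = r s\<^sub>\<mu>s\<^sub>\<nu>\<^sup>*\<close> with \<open>s\<^sub>\<mu>\<^sub>\<alpha>s\<^sub>\<mu>\<^sub>\<alpha>\<^sup>* \<in> \<D>\<close> gives
  \<open>r s\<^sub>\<nu>\<^sub>\<alpha>\<^sup>* = s\<^sub>\<mu>\<^sub>\<alpha>\<^sup>* s\<^sub>\<mu>\<^sub>\<alpha>s\<^sub>\<mu>\<^sub>\<alpha>\<^sup>* x = s\<^sub>\<mu>\<^sub>\<alpha>\<^sup>* x s\<^sub>\<mu>\<^sub>\<alpha>s\<^sub>\<mu>\<^sub>\<alpha>\<^sup>* = 0\<close>,
  hence \<open>r p\<^sub>v = 0\<close> for \<open>v = s(\<alpha>)\<close>. That is impossible: \<open>\<Lambda>\<close> has no sources, so there are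
  infinite paths starting at \<open>v\<close>, and in the representation of \<open>KP\<^sub>R(\<Lambda>)\<close> on \<open>R\<close>-valued
  functions on infinite paths \<open>r p\<^sub>v\<close> multiplies by \<open>r\<close> on them. The reverse inclusion
  follows by applying the involution \<open>*\<close>, which preserves \<open>\<D>'\<close>.\<close>

lemma in_Nk_zero [simp]: "in_Nk k 0"
  by (simp add: in_Nk_def)

lemma in_Nk_add [simp]: "in_Nk k (m + n) \<longleftrightarrow> in_Nk k m \<and> in_Nk k n"
  by (auto simp: in_Nk_def)

lemma in_Nk_mono: "m \<le> n \<Longrightarrow> in_Nk k n \<Longrightarrow> in_Nk k m"
  by (auto simp: in_Nk_def le_fun_def) (metis le_zero_eq)

lemma in_Nk_diff: "in_Nk k m \<Longrightarrow> in_Nk k (m - n)"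
  by (simp add: in_Nk_def)

lemma in_Nk_sup: "in_Nk k m \<Longrightarrow> in_Nk k n \<Longrightarrow> in_Nk k (sup m n)"
  by (simp add: in_Nk_def)

lemma le_add_fun1 [simp]: "(m :: 'a \<Rightarrow> nat) \<le> m + n"
  and le_add_fun2 [simp]: "(n :: 'a \<Rightarrow> nat) \<le> m + n"
  by (simp_all add: le_fun_def)

lemma le_add_diff_inverse_fun: "(m :: 'a \<Rightarrow> nat) \<le> n \<Longrightarrow> m + (n - m) = n"
  by (simp add: le_fun_def fun_eq_iff)

definition no_sources :: "nat \<Rightarrow> 'p kgraph \<Rightarrow> bool" where
  "no_sources k G \<longleftrightarrow> (\<forall>v\<in>vertices G. \<forall>n. in_Nk k n \<longrightarrow> vLn G v n \<noteq> {})"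

lemma no_sources_if_row_finite: "row_finite_no_sources k G \<Longrightarrow> no_sources k G"
  by (simp add: row_finite_no_sources_def no_sources_def)

section \<open>Calculating modulo the Kumjian--Pask relations\<close>

declare kp_eq.trans [trans]

locale kumjian_pask =
  fixes k :: nat and G :: "'p kgraph"
begin

abbreviation kp_equiv :: "('p, 'r::comm_ring_1) kpt \<Rightarrow> ('p, 'r) kpt \<Rightarrow> bool" (infix "\<approx>" 50)
  where "a \<approx> b \<equiv> kp_eq k G a b"

lemma mul_cong_left: "a \<approx> b \<Longrightarrow> Mul c a \<approx> Mul c b"
  by (rule kp_eq.cong_mul[OF kp_eq.refl])

lemma mul_cong_right: "a \<approx> b \<Longrightarrow> Mul a c \<approx> Mul b c"
  by (rule kp_eq.cong_mul[OF _ kp_eq.refl])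

lemma add_cong_left: "a \<approx> b \<Longrightarrow> Add c a \<approx> Add c b"
  by (rule kp_eq.cong_add[OF kp_eq.refl])

lemma add_cong_right: "a \<approx> b \<Longrightarrow> Add a c \<approx> Add b c"
  by (rule kp_eq.cong_add[OF _ kp_eq.refl])

lemma mul_assoc_sym: "Mul a (Mul b c) \<approx> Mul (Mul a b) c"
  by (rule kp_eq.sym[OF kp_eq.mul_assoc])

lemma mul_smul_left: "Mul (Smul r a) b \<approx> Smul r (Mul a b)"
  by (rule kp_eq.sym[OF kp_eq.smul_mul_left])

lemma mul_smul_right: "Mul a (Smul r b) \<approx> Smul r (Mul a b)"
  by (rule kp_eq.sym[OF kp_eq.smul_mul_right])

lemma eq_zero_if_eq_double: "a \<approx> Add a a \<Longrightarrow> a \<approx> Zero"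
proof -
  assume double: "a \<approx> Add a a"
  have "Zero \<approx> Add a (Neg a)" by (rule kp_eq.sym[OF kp_eq.add_neg])
  also have "\<dots> \<approx> Add (Add a a) (Neg a)" by (rule add_cong_right[OF double])
  also have "\<dots> \<approx> Add a (Add a (Neg a))" by (rule kp_eq.add_assoc)
  also have "\<dots> \<approx> Add a Zero" by (rule add_cong_left[OF kp_eq.add_neg])
  also have "\<dots> \<approx> a" by (rule kp_eq.add_zero)
  finally show ?thesis by (rule kp_eq.sym)
qed

lemma mul_Zero_right: "Mul a Zero \<approx> Zero"
proof (rule eq_zero_if_eq_double)
  have "Mul a Zero \<approx> Mul a (Add Zero Zero)" by (rule mul_cong_left[OF kp_eq.sym[OF kp_eq.add_zero]])
  also have "\<dots> \<approx> Add (Mul a Zero) (Mul a Zero)" by (rule kp_eq.distl)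
  finally show "Mul a Zero \<approx> Add (Mul a Zero) (Mul a Zero)" .
qed

lemma mul_Zero_left: "Mul Zero a \<approx> Zero"
proof (rule eq_zero_if_eq_double)
  have "Mul Zero a \<approx> Mul (Add Zero Zero) a" by (rule mul_cong_right[OF kp_eq.sym[OF kp_eq.add_zero]])
  also have "\<dots> \<approx> Add (Mul Zero a) (Mul Zero a)" by (rule kp_eq.distr)
  finally show "Mul Zero a \<approx> Add (Mul Zero a) (Mul Zero a)" .
qed

lemma smul_Zero: "Smul r Zero \<approx> Zero"
proof (rule eq_zero_if_eq_double)
  have "Smul r Zero \<approx> Smul r (Add Zero Zero)" by (rule kp_eq.cong_smul[OF kp_eq.sym[OF kp_eq.add_zero]])
  also have "\<dots> \<approx> Add (Smul r Zero) (Smul r Zero)" by (rule kp_eq.smul_add)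
  finally show "Smul r Zero \<approx> Add (Smul r Zero) (Smul r Zero)" .
qed

lemma mul_eq_Zero_if_left: "a \<approx> Zero \<Longrightarrow> Mul a b \<approx> Zero"
  using mul_cong_right mul_Zero_left kp_eq.trans by blast

lemma mul_eq_Zero_if_right: "b \<approx> Zero \<Longrightarrow> Mul a b \<approx> Zero"
  using mul_cong_left mul_Zero_right kp_eq.trans by blast

lemma smul_eq_Zero: "a \<approx> Zero \<Longrightarrow> Smul r a \<approx> Zero"
  using kp_eq.cong_smul smul_Zero kp_eq.trans by blast

lemma tsum_Nil [simp]: "tsum [] = Zero"
  and tsum_Cons [simp]: "tsum (x # xs) = Add x (tsum xs)"
  by (simp_all add: tsum_def)

lemma tsum_cong: "(\<And>x. x \<in> set xs \<Longrightarrow> f x \<approx> g x) \<Longrightarrow> tsum (map f xs) \<approx> tsum (map g xs)"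
  by (induction xs) (auto intro: kp_eq.refl kp_eq.cong_add)

lemma mul_tsum_left: "Mul c (tsum (map f xs)) \<approx> tsum (map (\<lambda>x. Mul c (f x)) xs)"
proof (induction xs)
  case Nil
  then show ?case by (simp add: mul_Zero_right)
next
  case (Cons a xs)
  have "Mul c (tsum (map f (a # xs))) \<approx> Add (Mul c (f a)) (Mul c (tsum (map f xs)))"
    by (simp add: kp_eq.distl)
  also have "\<dots> \<approx> Add (Mul c (f a)) (tsum (map (\<lambda>x. Mul c (f x)) xs))"
    by (rule add_cong_left[OF Cons.IH])
  finally show ?case by simp
qed

lemma mul_tsum_right: "Mul (tsum (map f xs)) c \<approx> tsum (map (\<lambda>x. Mul (f x) c) xs)"
proof (induction xs)
  case Nil
  then show ?case by (simp add: mul_Zero_left)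
next
  case (Cons a xs)
  have "Mul (tsum (map f (a # xs))) c \<approx> Add (Mul (f a) c) (Mul (tsum (map f xs)) c)"
    by (simp add: kp_eq.distr)
  also have "\<dots> \<approx> Add (Mul (f a) c) (tsum (map (\<lambda>x. Mul (f x) c) xs))"
    by (rule add_cong_left[OF Cons.IH])
  finally show ?case by simp
qed

lemma tsum_remove1: "a \<in> set xs \<Longrightarrow> tsum (map f xs) \<approx> Add (f a) (tsum (map f (remove1 a xs)))"
proof (induction xs)
  case (Cons b xs)
  show ?case
  proof (cases "a = b")
    case False
    then have "tsum (map f (b # xs)) \<approx> Add (f b) (Add (f a) (tsum (map f (remove1 a xs))))"
      using Cons by (simp add: add_cong_left)
    also have "\<dots> \<approx> Add (Add (f b) (f a)) (tsum (map f (remove1 a xs)))"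
      by (rule kp_eq.sym[OF kp_eq.add_assoc])
    also have "\<dots> \<approx> Add (Add (f a) (f b)) (tsum (map f (remove1 a xs)))"
      by (rule add_cong_right[OF kp_eq.add_comm])
    also have "\<dots> \<approx> Add (f a) (Add (f b) (tsum (map f (remove1 a xs))))"
      by (rule kp_eq.add_assoc)
    finally show ?thesis using False by simp
  qed (simp add: kp_eq.refl)
qed simp

lemma tsum_perm:
  "distinct xs \<Longrightarrow> distinct ys \<Longrightarrow> set xs = set ys \<Longrightarrow> tsum (map f xs) \<approx> tsum (map f ys)"
proof (induction xs arbitrary: ys)
  case Nil
  then show ?case by (simp add: kp_eq.refl)
next
  case (Cons a xs)
  then have "tsum (map f xs) \<approx> tsum (map f (remove1 a ys))"
    by (intro Cons.IH) auto
  then have "tsum (map f (a # xs)) \<approx> Add (f a) (tsum (map f (remove1 a ys)))"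
    by (simp add: add_cong_left)
  also have "\<dots> \<approx> tsum (map f ys)"
    using Cons.prems by (intro kp_eq.sym[OF tsum_remove1]) auto
  finally show ?case .
qed

end

fun adj_gen :: "'p kpgen \<Rightarrow> 'p kpgen" where
  "adj_gen (Pg v) = Pg v"
| "adj_gen (Sg l) = Ssg l"
| "adj_gen (Ssg l) = Sg l"

primrec adj :: "('p, 'r) kpt \<Rightarrow> ('p, 'r) kpt" where
  "adj (Gen g) = Gen (adj_gen g)"
| "adj Zero = Zero"
| "adj (Add a b) = Add (adj a) (adj b)"
| "adj (Neg a) = Neg (adj a)"
| "adj (Mul a b) = Mul (adj b) (adj a)"
| "adj (Smul c a) = Smul c (adj a)"

lemma adj_adj [simp]: "adj (adj a) = a"
proof (induction a)
  case (Gen g)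
  then show ?case by (cases g) simp_all
qed simp_all

lemma adj_tP [simp]: "adj (tP v) = tP v"
  and adj_tS [simp]: "adj (tS G l) = tSs G l"
  and adj_tSs [simp]: "adj (tSs G l) = tS G l"
  by (simp_all add: tP_def tS_def tSs_def)

lemma adj_tsum [simp]: "adj (tsum xs) = tsum (map adj xs)"
  by (induction xs) (simp_all add: tsum_def)

lemma valid_gen_adj_gen [simp]: "valid_gen G (adj_gen g) = valid_gen G g"
  by (cases g) (simp_all add: valid_gen_def)

lemma kp_eq_adj: "kp_eq k G a b \<Longrightarrow> kp_eq k G (adj a) (adj b)"
proof (induction rule: kp_eq.induct)
  case (mul_assoc a b c)
  then show ?case by (simp add: kp_eq.sym[OF kp_eq.mul_assoc])
next
  case (distl a b c)
  then show ?case by (simp add: kp_eq.distr)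
next
  case (distr a b c)
  then show ?case by (simp add: kp_eq.distl)
next
  case (smul_mul_left r a b)
  then show ?case by (simp add: kp_eq.smul_mul_right)
next
  case (smul_mul_right r a b)
  then show ?case by (simp add: kp_eq.smul_mul_left)
next
  case (KP1a v)
  then show ?case by (simp add: kp_eq.KP1a)
next
  case (KP1b v w)
  then show ?case by (simp add: kp_eq.KP1b)
next
  case (KP2a l m)
  then show ?case by (simp add: kp_eq.KP2b)
next
  case (KP2b l m)
  then show ?case by (simp add: kp_eq.KP2a)
next
  case (KP2c l)
  then show ?case by (simp add: kp_eq.KP2f)
next
  case (KP2d l)
  then show ?case by (simp add: kp_eq.KP2e)
next
  case (KP2e l)
  then show ?case by (simp add: kp_eq.KP2d)
next
  case (KP2f l)
  then show ?case by (simp add: kp_eq.KP2c)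
next
  case (KP3 l m)
  then show ?case using kp_eq.KP3[OF KP3(2,1) KP3(3)[symmetric]] by (auto simp: tP_def)
next
  case (KP4 v n ls)
  then show ?case using kp_eq.KP4[OF KP4] by (simp add: comp_def tP_def)
qed (auto intro: kp_eq.intros)

lemma adj_in_kp_D: "a \<in> kp_D k G \<Longrightarrow> adj a \<in> kp_D k G"
  by (induction rule: kp_D.induct) (auto intro: kp_D.intros)

lemma kp_in_D'_adj:
  fixes a :: "('p, 'r::comm_ring_1) kpt"
  assumes "kp_in_D' k G a"
  shows "kp_in_D' k G (adj a)"
  unfolding kp_in_D'_def
proof
  fix d :: "('p, 'r) kpt"
  assume "d \<in> kp_D k G"
  then have "kp_eq k G (Mul a (adj d)) (Mul (adj d) a)"
    using assms adj_in_kp_D unfolding kp_in_D'_def by blast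
  then show "kp_eq k G (Mul (adj a) d) (Mul d (adj a))"
    using kp_eq_adj kp_eq.sym by fastforce
qed

section \<open>Factorisation of paths\<close>

locale kgraph = kumjian_pask k G for k :: nat and G :: "'p kgraph" +
  assumes is_kgraph: "is_kgraph k G"
begin

lemma rng_in_paths: "l \<in> paths G \<Longrightarrow> rng G l \<in> paths G"
  and src_in_paths: "l \<in> paths G \<Longrightarrow> src G l \<in> paths G"
  using is_kgraph unfolding is_kgraph_def by (elim conjE; simp)+

lemma src_rng [simp]: "l \<in> paths G \<Longrightarrow> src G (rng G l) = rng G l"
  and rng_src [simp]: "l \<in> paths G \<Longrightarrow> rng G (src G l) = src G l"
  using is_kgraph unfolding is_kgraph_def by (elim conjE; simp)+

lemma cmp_rng_left [simp]: "l \<in> paths G \<Longrightarrow> cmp G (rng G l) l = l"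
  and cmp_src_right [simp]: "l \<in> paths G \<Longrightarrow> cmp G l (src G l) = l"
  using is_kgraph unfolding is_kgraph_def by (elim conjE; simp)+

lemma cmp_in_paths: "l \<in> paths G \<Longrightarrow> m \<in> paths G \<Longrightarrow> src G l = rng G m \<Longrightarrow> cmp G l m \<in> paths G"
  and rng_cmp: "l \<in> paths G \<Longrightarrow> m \<in> paths G \<Longrightarrow> src G l = rng G m \<Longrightarrow> rng G (cmp G l m) = rng G l"
  and src_cmp: "l \<in> paths G \<Longrightarrow> m \<in> paths G \<Longrightarrow> src G l = rng G m \<Longrightarrow> src G (cmp G l m) = src G m"
  using is_kgraph unfolding is_kgraph_def by (elim conjE; simp)+

lemma cmp_assoc:
  "\<lbrakk>l \<in> paths G; m \<in> paths G; n \<in> paths G; src G l = rng G m; src G m = rng G n\<rbrakk>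
   \<Longrightarrow> cmp G (cmp G l m) n = cmp G l (cmp G m n)"
  using is_kgraph unfolding is_kgraph_def by (elim conjE; simp)

lemma in_Nk_deg: "l \<in> paths G \<Longrightarrow> in_Nk k (deg G l)"
  using is_kgraph unfolding is_kgraph_def by (elim conjE; simp)

lemma deg_cmp: "l \<in> paths G \<Longrightarrow> m \<in> paths G \<Longrightarrow> src G l = rng G m \<Longrightarrow> deg G (cmp G l m) = deg G l + deg G m"
  using is_kgraph unfolding is_kgraph_def by (elim conjE; simp add: plus_fun_def)

lemma unique_factorisation:
  "l \<in> paths G \<Longrightarrow> deg G l = m + n \<Longrightarrow>
   \<exists>!(a, b). a \<in> paths G \<and> b \<in> paths G \<and> src G a = rng G b \<and> deg G a = m \<and> deg G b = n \<and> cmp G a b = l"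
  using is_kgraph unfolding is_kgraph_def plus_fun_def by (elim conjE) (simp only: Ball_def)

lemma deg_rng [simp]: "l \<in> paths G \<Longrightarrow> deg G (rng G l) = 0"
proof -
  assume l: "l \<in> paths G"
  have "deg G l = deg G (rng G l) + deg G l"
    using deg_cmp[OF rng_in_paths[OF l] l] l by simp
  then show ?thesis by (simp add: fun_eq_iff)
qed

lemma deg_src [simp]: "l \<in> paths G \<Longrightarrow> deg G (src G l) = 0"
  using deg_rng[OF src_in_paths] by (metis rng_src)

lemma deg_zero_rng_src:
  assumes l: "l \<in> paths G" and d: "deg G l = 0"
  shows "rng G l = l" "src G l = l"
proof -
  let ?F = "\<lambda>(a, b). a \<in> paths G \<and> b \<in> paths G \<and> src G a = rng G b \<and>
                     deg G a = 0 \<and> deg G b = 0 \<and> cmp G a b = l"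
  have "\<exists>!p. ?F p" using unique_factorisation[OF l, of 0 0] d by simp
  moreover have "?F (rng G l, l)" "?F (l, src G l)" using l d by (simp_all add: rng_in_paths src_in_paths)
  ultimately have "(rng G l, l) = (l, src G l)" by blast
  then show "rng G l = l" "src G l = l" by auto
qed

lemma vertices_iff: "v \<in> vertices G \<longleftrightarrow> v \<in> paths G \<and> deg G v = 0"
  unfolding vertices_def using deg_zero_rng_src by (metis (mono_tags, lifting) deg_rng mem_Collect_eq)

lemma rng_in_vertices: "l \<in> paths G \<Longrightarrow> rng G l \<in> vertices G"
  and src_in_vertices: "l \<in> paths G \<Longrightarrow> src G l \<in> vertices G"
  by (simp_all add: vertices_iff rng_in_paths src_in_paths)

definition factor :: "'p \<Rightarrow> (nat \<Rightarrow> nat) \<Rightarrow> 'p \<times> 'p" where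
  "factor l m = (THE (a, b). a \<in> paths G \<and> b \<in> paths G \<and> src G a = rng G b \<and>
                   deg G a = m \<and> deg G b = deg G l - m \<and> cmp G a b = l)"

definition "prefix l m = fst (factor l m)"
definition "suffix l m = snd (factor l m)"

lemma
  assumes l: "l \<in> paths G" and m: "m \<le> deg G l"
  shows prefix_in_paths: "prefix l m \<in> paths G"
    and suffix_in_paths: "suffix l m \<in> paths G"
    and src_prefix: "src G (prefix l m) = rng G (suffix l m)"
    and deg_prefix: "deg G (prefix l m) = m"
    and deg_suffix: "deg G (suffix l m) = deg G l - m"
    and cmp_prefix_suffix: "cmp G (prefix l m) (suffix l m) = l"
proof -
  have "deg G l = m + (deg G l - m)" using m by (simp add: le_add_diff_inverse_fun)
  from theI'[OF unique_factorisation[OF l this]]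
  show "prefix l m \<in> paths G" "suffix l m \<in> paths G" "src G (prefix l m) = rng G (suffix l m)"
    "deg G (prefix l m) = m" "deg G (suffix l m) = deg G l - m" "cmp G (prefix l m) (suffix l m) = l"
    unfolding prefix_def suffix_def factor_def by (auto split: prod.splits)
qed

lemma
  assumes a: "a \<in> paths G" and b: "b \<in> paths G" and s: "src G a = rng G b"
  shows prefix_cmp_deg: "prefix (cmp G a b) (deg G a) = a"
    and suffix_cmp_deg: "suffix (cmp G a b) (deg G a) = b"
proof -
  have d: "deg G (cmp G a b) = deg G a + deg G b" using a b s by (rule deg_cmp)
  have "factor (cmp G a b) (deg G a) = (a, b)"
    unfolding factor_def d add_diff_cancel_left'
    by (rule the1_equality[OF unique_factorisation[OF cmp_in_paths[OF a b s] d]]) (use a b s in auto)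
  then show "prefix (cmp G a b) (deg G a) = a" "suffix (cmp G a b) (deg G a) = b"
    by (simp_all add: prefix_def suffix_def)
qed

lemma prefix_zero: "l \<in> paths G \<Longrightarrow> prefix l 0 = rng G l"
  and suffix_zero: "l \<in> paths G \<Longrightarrow> suffix l 0 = l"
  using prefix_cmp_deg[of "rng G l" l] suffix_cmp_deg[of "rng G l" l] by (simp_all add: rng_in_paths)

lemma suffix_deg: "l \<in> paths G \<Longrightarrow> suffix l (deg G l) = src G l"
  using suffix_cmp_deg[of l "src G l"] by (simp add: src_in_paths)

lemma
  assumes a: "a \<in> paths G" and b: "b \<in> paths G" and s: "src G a = rng G b" and e: "e \<le> deg G a"
  shows prefix_cmp: "prefix (cmp G a b) e = prefix a e"
    and suffix_cmp: "suffix (cmp G a b) e = cmp G (suffix a e) b"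
proof -
  let ?a\<^sub>1 = "prefix a e" and ?a\<^sub>2 = "suffix a e"
  have a\<^sub>1: "?a\<^sub>1 \<in> paths G" and a\<^sub>2: "?a\<^sub>2 \<in> paths G" and s\<^sub>1: "src G ?a\<^sub>1 = rng G ?a\<^sub>2"
    using a e by (simp_all add: prefix_in_paths suffix_in_paths src_prefix)
  have s\<^sub>2: "src G ?a\<^sub>2 = rng G b"
    using src_cmp[OF a\<^sub>1 a\<^sub>2 s\<^sub>1] s a e by (simp add: cmp_prefix_suffix)
  have "cmp G a b = cmp G ?a\<^sub>1 (cmp G ?a\<^sub>2 b)"
    using cmp_assoc[OF a\<^sub>1 a\<^sub>2 b s\<^sub>1 s\<^sub>2] a e by (simp add: cmp_prefix_suffix)
  then show "prefix (cmp G a b) e = ?a\<^sub>1" "suffix (cmp G a b) e = cmp G ?a\<^sub>2 b"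
    using prefix_cmp_deg[OF a\<^sub>1 cmp_in_paths[OF a\<^sub>2 b s\<^sub>2]] suffix_cmp_deg[OF a\<^sub>1 cmp_in_paths[OF a\<^sub>2 b s\<^sub>2]]
      rng_cmp[OF a\<^sub>2 b s\<^sub>2] s\<^sub>1 a e by (simp_all add: deg_prefix)
qed

lemma prefix_prefix:
  assumes l: "l \<in> paths G" and "n \<le> m" "m \<le> deg G l"
  shows "prefix (prefix l m) n = prefix l n"
  using prefix_cmp[OF prefix_in_paths suffix_in_paths src_prefix, of l m n] assms
  by (simp add: deg_prefix cmp_prefix_suffix)

lemma suffix_suffix:
  assumes l: "l \<in> paths G" and le: "m + n \<le> deg G l"
  shows "suffix (suffix l m) n = suffix l (m + n)"
proof -
  have m: "m \<le> deg G l" using le le_add_fun1 order_trans by blast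
  let ?a = "prefix l m" and ?b = "suffix l m"
  have n: "n \<le> deg G ?b" using le l m by (simp add: deg_suffix le_fun_def le_diff_conv2 add.commute)
  let ?b\<^sub>1 = "prefix ?b n" and ?b\<^sub>2 = "suffix ?b n"
  have ab: "?a \<in> paths G" "?b \<in> paths G" "src G ?a = rng G ?b"
    using l m by (simp_all add: prefix_in_paths suffix_in_paths src_prefix)
  have bb: "?b\<^sub>1 \<in> paths G" "?b\<^sub>2 \<in> paths G" "src G ?b\<^sub>1 = rng G ?b\<^sub>2"
    using ab(2) n by (simp_all add: prefix_in_paths suffix_in_paths src_prefix)
  have s: "src G ?a = rng G ?b\<^sub>1"
    using ab(3) rng_cmp[OF bb] ab(2) n by (simp add: cmp_prefix_suffix)
  have "l = cmp G (cmp G ?a ?b\<^sub>1) ?b\<^sub>2"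
    using cmp_assoc[OF ab(1) bb(1,2) s bb(3)] ab(2) n l m by (simp add: cmp_prefix_suffix)
  moreover have "deg G (cmp G ?a ?b\<^sub>1) = m + n"
    using deg_cmp[OF ab(1) bb(1) s] l m ab(2) n by (simp add: deg_prefix)
  ultimately show ?thesis
    using suffix_cmp_deg[OF cmp_in_paths[OF ab(1) bb(1) s] bb(2)] src_cmp[OF ab(1) bb(1) s] bb(3) by simp
qed

lemma prefix_suffix:
  assumes l: "l \<in> paths G" and le: "m + n \<le> deg G l"
  shows "prefix (suffix l m) n = suffix (prefix l (m + n)) m"
proof -
  let ?a = "prefix l (m + n)" and ?b = "suffix l (m + n)"
  have ab: "?a \<in> paths G" "?b \<in> paths G" "src G ?a = rng G ?b" "deg G ?a = m + n"
    using l le by (simp_all add: prefix_in_paths suffix_in_paths src_prefix deg_prefix)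
  have m: "m \<le> deg G ?a" using ab(4) by simp
  have "suffix l m = cmp G (suffix ?a m) ?b"
    using suffix_cmp[OF ab(1-3) m] l le by (simp add: cmp_prefix_suffix)
  moreover have "src G (suffix ?a m) = rng G ?b"
    using src_cmp[OF prefix_in_paths[OF ab(1) m] suffix_in_paths[OF ab(1) m] src_prefix[OF ab(1) m]]
      ab(1,3) m
    by (simp add: cmp_prefix_suffix)
  moreover have "deg G (suffix ?a m) = n" using ab(1,4) m by (simp add: deg_suffix)
  ultimately show ?thesis
    using prefix_cmp_deg[OF suffix_in_paths[OF ab(1) m] ab(2)] by simp
qed

lemma inj_on_cmp: "\<mu> \<in> paths G \<Longrightarrow> inj_on (cmp G \<mu>) (vLn G (src G \<mu>) n)"
  by (rule inj_onI) (metis (mono_tags, lifting) mem_Collect_eq suffix_cmp_deg vLn_def)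

section \<open>Infinite paths\<close>

type_synonym 'a ipath = "(nat \<Rightarrow> nat) \<Rightarrow> 'a"

text \<open>An infinite path is recorded by its initial segments \<open>x n\<close> of every degree \<open>n \<in> \<nat>\<^sup>k\<close>;
  the value \<open>undefined\<close> outside \<open>\<nat>\<^sup>k\<close> makes equality of infinite paths extensional.\<close>

definition inf_path :: "'p ipath \<Rightarrow> bool" where
  "inf_path x \<longleftrightarrow>
     (\<forall>n. in_Nk k n \<longrightarrow> x n \<in> paths G \<and> deg G (x n) = n) \<and>
     (\<forall>n. \<not> in_Nk k n \<longrightarrow> x n = undefined) \<and>
     (\<forall>m n. in_Nk k m \<longrightarrow> n \<le> m \<longrightarrow> prefix (x m) n = x n)"

definition shift :: "(nat \<Rightarrow> nat) \<Rightarrow> 'p ipath \<Rightarrow> 'p ipath" where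
  "shift d x = (\<lambda>n. if in_Nk k n then suffix (x (d + n)) d else undefined)"

definition prepend :: "'p \<Rightarrow> 'p ipath \<Rightarrow> 'p ipath" where
  "prepend l x = (\<lambda>n. if in_Nk k n then prefix (cmp G l (x n)) n else undefined)"

lemma
  assumes "inf_path x"
  shows inf_path_in_paths: "in_Nk k n \<Longrightarrow> x n \<in> paths G"
    and deg_inf_path: "in_Nk k n \<Longrightarrow> deg G (x n) = n"
    and inf_path_undefined: "\<not> in_Nk k n \<Longrightarrow> x n = undefined"
    and prefix_inf_path: "in_Nk k m \<Longrightarrow> n \<le> m \<Longrightarrow> prefix (x m) n = x n"
  using assms unfolding inf_path_def by blast+

lemma rng_inf_path: "inf_path x \<Longrightarrow> in_Nk k n \<Longrightarrow> rng G (x n) = x 0"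
  by (metis inf_path_in_paths prefix_inf_path prefix_zero zero_le)

lemma inf_path_at_zero: "inf_path x \<Longrightarrow> l \<in> paths G \<Longrightarrow> x (deg G l) = l \<Longrightarrow> x 0 = rng G l"
  by (metis in_Nk_deg rng_inf_path)

lemma
  assumes x: "inf_path x" and m: "in_Nk k m" and nm: "n \<le> m"
  shows inf_path_split: "x m = cmp G (x n) (suffix (x m) n)"
    and suffix_inf_path_in_paths: "suffix (x m) n \<in> paths G"
    and src_inf_path: "src G (x n) = rng G (suffix (x m) n)"
  using cmp_prefix_suffix suffix_in_paths src_prefix prefix_inf_path[OF x m nm]
    inf_path_in_paths[OF x m] deg_inf_path[OF x m] nm by metis+

lemma inf_path_shift:
  assumes x: "inf_path x" and d: "in_Nk k d"
  shows "inf_path (shift d x)"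
  unfolding inf_path_def
proof (intro conjI allI impI)
  fix n assume n: "in_Nk k n"
  then have "x (d + n) \<in> paths G" "deg G (x (d + n)) = d + n"
    using x d by (simp_all add: inf_path_in_paths deg_inf_path)
  then show "shift d x n \<in> paths G" "deg G (shift d x n) = n"
    using n by (simp_all add: shift_def suffix_in_paths deg_suffix)
next
  fix n assume "\<not> in_Nk k n"
  then show "shift d x n = undefined" by (simp add: shift_def)
next
  fix m n assume m: "in_Nk k m" and nm: "n \<le> m"
  have dm: "x (d + m) \<in> paths G" "deg G (x (d + m)) = d + m"
    using x d m by (simp_all add: inf_path_in_paths deg_inf_path)
  have "prefix (suffix (x (d + m)) d) n = suffix (prefix (x (d + m)) (d + n)) d"
    using prefix_suffix dm nm by (simp add: add_left_mono)
  also have "\<dots> = suffix (x (d + n)) d"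
    using prefix_inf_path[OF x] d m nm by (simp add: add_left_mono)
  finally show "prefix (shift d x m) n = shift d x n"
    using m in_Nk_mono[OF nm m] by (simp add: shift_def)
qed

lemma shift_at_zero: "inf_path x \<Longrightarrow> in_Nk k d \<Longrightarrow> shift d x 0 = src G (x d)"
  by (simp add: shift_def) (metis deg_inf_path inf_path_in_paths suffix_deg)

lemma shift_shift:
  assumes x: "inf_path x" and a: "in_Nk k a" and b: "in_Nk k b"
  shows "shift b (shift a x) = shift (a + b) x"
proof
  fix n
  show "shift b (shift a x) n = shift (a + b) x n"
  proof (cases "in_Nk k n")
    case True
    have "x (a + (b + n)) \<in> paths G" "deg G (x (a + (b + n))) = a + (b + n)"
      using x a b True by (simp_all add: inf_path_in_paths deg_inf_path)
    then show ?thesis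
      using True b by (simp add: shift_def suffix_suffix add.assoc add_left_mono)
  qed (simp add: shift_def)
qed

lemma shift_zero: "inf_path x \<Longrightarrow> shift 0 x = x"
  by (rule ext) (simp add: shift_def suffix_zero inf_path_in_paths inf_path_undefined)

lemma inf_path_cmp_iff:
  assumes x: "inf_path x" and l: "l \<in> paths G" and m: "m \<in> paths G" and s: "src G l = rng G m"
  shows "x (deg G l + deg G m) = cmp G l m \<longleftrightarrow> x (deg G l) = l \<and> shift (deg G l) x (deg G m) = m"
proof -
  let ?y = "x (deg G l + deg G m)"
  have N: "in_Nk k (deg G l + deg G m)" using l m by (simp add: in_Nk_deg)
  have y: "?y \<in> paths G" "deg G ?y = deg G l + deg G m"
    using x N by (simp_all add: inf_path_in_paths deg_inf_path)
  have "prefix ?y (deg G l) = x (deg G l)" using prefix_inf_path[OF x N] by simp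
  moreover have "shift (deg G l) x (deg G m) = suffix ?y (deg G l)"
    using m by (simp add: shift_def in_Nk_deg)
  moreover have "cmp G (prefix ?y (deg G l)) (suffix ?y (deg G l)) = ?y"
    using y by (simp add: cmp_prefix_suffix)
  ultimately show ?thesis
    using prefix_cmp_deg[OF l m s] suffix_cmp_deg[OF l m s] by auto
qed

lemma inf_path_prepend:
  assumes x: "inf_path x" and l: "l \<in> paths G" and s: "x 0 = src G l"
  shows "inf_path (prepend l x)"
  unfolding inf_path_def
proof (intro conjI allI impI)
  fix n assume n: "in_Nk k n"
  have "src G l = rng G (x n)" using rng_inf_path[OF x n] s by simp
  then have "cmp G l (x n) \<in> paths G" "n \<le> deg G (cmp G l (x n))"
    using l x n by (simp_all add: cmp_in_paths inf_path_in_paths deg_cmp deg_inf_path)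
  then show "prepend l x n \<in> paths G" "deg G (prepend l x n) = n"
    using n by (simp_all add: prepend_def prefix_in_paths deg_prefix)
next
  fix n assume "\<not> in_Nk k n"
  then show "prepend l x n = undefined" by (simp add: prepend_def)
next
  fix m n assume m: "in_Nk k m" and nm: "n \<le> m"
  have n: "in_Nk k n" using in_Nk_mono[OF nm m] .
  have xn: "x n \<in> paths G" "src G l = rng G (x n)" "deg G (x n) = n"
    using x n s by (simp_all add: inf_path_in_paths rng_inf_path deg_inf_path)
  have xm: "x m \<in> paths G" "src G l = rng G (x m)" "deg G (x m) = m"
    using x m s by (simp_all add: inf_path_in_paths rng_inf_path deg_inf_path)
  have lm: "cmp G l (x m) \<in> paths G" "m \<le> deg G (cmp G l (x m))"
    using l xm by (simp_all add: cmp_in_paths deg_cmp)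
  have "cmp G l (x m) = cmp G (cmp G l (x n)) (suffix (x m) n)"
    using cmp_assoc[OF l xn(1) suffix_inf_path_in_paths[OF x m nm] xn(2) src_inf_path[OF x m nm]]
      inf_path_split[OF x m nm] by simp
  then have "prefix (cmp G l (x m)) n = prefix (cmp G l (x n)) n"
    using prefix_cmp[OF cmp_in_paths[OF l xn(1,2)] suffix_inf_path_in_paths[OF x m nm]]
      src_cmp[OF l xn(1,2)] src_inf_path[OF x m nm] deg_cmp[OF l xn(1,2)] xn(3) by simp
  then show "prefix (prepend l x m) n = prepend l x n"
    using prefix_prefix[OF lm(1) nm lm(2)] m n by (simp add: prepend_def)
qed

lemma prepend_at_zero: "inf_path x \<Longrightarrow> l \<in> paths G \<Longrightarrow> x 0 = src G l \<Longrightarrow> prepend l x 0 = rng G l"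
  by (simp add: prepend_def prefix_zero cmp_in_paths rng_cmp rng_inf_path inf_path_in_paths)

lemma prepend_at_deg: "inf_path x \<Longrightarrow> l \<in> paths G \<Longrightarrow> x 0 = src G l \<Longrightarrow> prepend l x (deg G l) = l"
  by (simp add: prepend_def in_Nk_deg prefix_cmp_deg rng_inf_path inf_path_in_paths)

lemma prepend_prepend:
  assumes x: "inf_path x" and l: "l \<in> paths G" and m: "m \<in> paths G" and s: "src G l = rng G m"
    and s\<^sub>0: "x 0 = src G m"
  shows "prepend l (prepend m x) = prepend (cmp G l m) x"
proof
  fix n
  show "prepend l (prepend m x) n = prepend (cmp G l m) x n"
  proof (cases "in_Nk k n")
    case n: True
    have xn: "x n \<in> paths G" "src G m = rng G (x n)" "deg G (x n) = n"
      using x n s\<^sub>0 by (simp_all add: inf_path_in_paths rng_inf_path deg_inf_path)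
    let ?y = "cmp G m (x n)"
    have y: "?y \<in> paths G" "n \<le> deg G ?y" "rng G ?y = rng G m"
      using m xn by (simp_all add: cmp_in_paths deg_cmp rng_cmp)
    let ?y\<^sub>1 = "prefix ?y n" and ?y\<^sub>2 = "suffix ?y n"
    have y\<^sub>1\<^sub>2: "?y\<^sub>1 \<in> paths G" "?y\<^sub>2 \<in> paths G" "src G ?y\<^sub>1 = rng G ?y\<^sub>2" "deg G ?y\<^sub>1 = n"
      using y by (simp_all add: prefix_in_paths suffix_in_paths src_prefix deg_prefix)
    have s\<^sub>1: "src G l = rng G ?y\<^sub>1"
      using rng_cmp[OF y\<^sub>1\<^sub>2(1-3)] y s by (simp add: cmp_prefix_suffix)
    have "cmp G (cmp G l m) (x n) = cmp G (cmp G l ?y\<^sub>1) ?y\<^sub>2"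
      using cmp_assoc[OF l m xn(1) s xn(2)] cmp_assoc[OF l y\<^sub>1\<^sub>2(1,2) s\<^sub>1 y\<^sub>1\<^sub>2(3)] y by (simp add: cmp_prefix_suffix)
    then have "prefix (cmp G (cmp G l m) (x n)) n = prefix (cmp G l ?y\<^sub>1) n"
      using prefix_cmp[OF cmp_in_paths[OF l y\<^sub>1\<^sub>2(1) s\<^sub>1] y\<^sub>1\<^sub>2(2)] src_cmp[OF l y\<^sub>1\<^sub>2(1) s\<^sub>1] y\<^sub>1\<^sub>2(3)
        deg_cmp[OF l y\<^sub>1\<^sub>2(1) s\<^sub>1] y\<^sub>1\<^sub>2(4) by simp
    then show ?thesis using n by (simp add: prepend_def)
  qed (simp add: prepend_def)
qed

lemma shift_prepend:
  assumes x: "inf_path x" and l: "l \<in> paths G" and s: "x 0 = src G l"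
  shows "shift (deg G l) (prepend l x) = x"
proof
  fix n
  show "shift (deg G l) (prepend l x) n = x n"
  proof (cases "in_Nk k n")
    case n: True
    have N: "in_Nk k (deg G l + n)" using n l by (simp add: in_Nk_deg)
    have xn: "x n \<in> paths G" "src G l = rng G (x n)" "deg G (x n) = n"
      using x n s by (simp_all add: inf_path_in_paths rng_inf_path deg_inf_path)
    have "cmp G l (x (deg G l + n)) = cmp G (cmp G l (x n)) (suffix (x (deg G l + n)) n)"
      using cmp_assoc[OF l xn(1) suffix_inf_path_in_paths[OF x N] xn(2) src_inf_path[OF x N]]
        inf_path_split[OF x N] by simp
    then have "prefix (cmp G l (x (deg G l + n))) (deg G l + n) = cmp G l (x n)"
      using prefix_cmp_deg[OF cmp_in_paths[OF l xn(1,2)] suffix_inf_path_in_paths[OF x N]]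
        src_cmp[OF l xn(1,2)] src_inf_path[OF x N] deg_cmp[OF l xn(1,2)] xn(3) by simp
    then show ?thesis
      using n N suffix_cmp_deg[OF l xn(1,2)] by (simp add: shift_def prepend_def)
  qed (simp add: shift_def prepend_def inf_path_undefined[OF x])
qed

lemma prepend_shift:
  assumes x: "inf_path x" and d: "in_Nk k d"
  shows "prepend (x d) (shift d x) = x"
proof
  fix m
  show "prepend (x d) (shift d x) m = x m"
  proof (cases "in_Nk k m")
    case m: True
    have "prefix (x (d + m)) m = x m" using prefix_inf_path[OF x] d m by simp
    then show ?thesis using m d inf_path_split[OF x, of "d + m" d] by (simp add: shift_def prepend_def)
  qed (simp add: prepend_def inf_path_undefined[OF x])
qed

lemma prepend_vertex: "inf_path x \<Longrightarrow> prepend (x 0) x = x"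
  using prepend_shift[of x 0] by (simp add: shift_zero)

section \<open>The infinite-path representation\<close>

definition op_p :: "'p \<Rightarrow> ('p ipath \<Rightarrow> 'r::comm_ring_1) \<Rightarrow> 'p ipath \<Rightarrow> 'r" where
  "op_p v f x = (if inf_path x \<and> x 0 = v then f x else 0)"

definition op_s :: "'p \<Rightarrow> ('p ipath \<Rightarrow> 'r::comm_ring_1) \<Rightarrow> 'p ipath \<Rightarrow> 'r" where
  "op_s l f x = (if inf_path x \<and> x (deg G l) = l then f (shift (deg G l) x) else 0)"

definition op_s_adj :: "'p \<Rightarrow> ('p ipath \<Rightarrow> 'r::comm_ring_1) \<Rightarrow> 'p ipath \<Rightarrow> 'r" where
  "op_s_adj l f x = (if inf_path x \<and> x 0 = src G l then f (prepend l x) else 0)"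

primrec rep :: "('p, 'r::comm_ring_1) kpt \<Rightarrow> ('p ipath \<Rightarrow> 'r) \<Rightarrow> 'p ipath \<Rightarrow> 'r" where
  "rep (Gen g) =
     (if valid_gen G g then (case g of Pg v \<Rightarrow> op_p v | Sg l \<Rightarrow> op_s l | Ssg l \<Rightarrow> op_s_adj l)
      else (\<lambda>f x. 0))"
| "rep Zero = (\<lambda>f x. 0)"
| "rep (Add a b) = (\<lambda>f x. rep a f x + rep b f x)"
| "rep (Neg a) = (\<lambda>f x. - rep a f x)"
| "rep (Mul a b) = (\<lambda>f. rep a (rep b f))"
| "rep (Smul c a) = (\<lambda>f x. c * rep a f x)"

lemma rep_add: "rep a (\<lambda>x. f x + g x) = (\<lambda>x. rep a f x + rep a g x)"
  and rep_scale: "rep a (\<lambda>x. c * f x) = (\<lambda>x. c * rep a f x)"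
  by (induction a arbitrary: f g c)
    (auto simp: op_p_def op_s_def op_s_adj_def algebra_simps split: kpgen.split)

lemma rep_tP: "v \<in> vertices G \<Longrightarrow> rep (tP v) = op_p v"
  by (simp add: tP_def valid_gen_def)

lemma rep_tS:
  assumes l: "l \<in> paths G"
  shows "rep (tS G l) = (op_s l :: ('p ipath \<Rightarrow> 'r::comm_ring_1) \<Rightarrow> _)"
proof (cases "deg G l = 0")
  case True
  have "op_p l = (op_s l :: ('p ipath \<Rightarrow> 'r) \<Rightarrow> _)"
    unfolding fun_eq_iff op_p_def op_s_def using True by (simp add: shift_zero)
  then show ?thesis using l True by (simp add: tS_def valid_gen_def vertices_iff zero_fun_def)
next
  case False
  then show ?thesis using l by (simp add: tS_def valid_gen_def zero_fun_def)
qed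

lemma rep_tSs:
  assumes l: "l \<in> paths G"
  shows "rep (tSs G l) = (op_s_adj l :: ('p ipath \<Rightarrow> 'r::comm_ring_1) \<Rightarrow> _)"
proof (cases "deg G l = 0")
  case True
  have "op_p l = (op_s_adj l :: ('p ipath \<Rightarrow> 'r) \<Rightarrow> _)"
    unfolding fun_eq_iff op_p_def op_s_adj_def using deg_zero_rng_src[OF l True]
    by (auto simp: prepend_vertex)
  then show ?thesis using l True by (simp add: tSs_def valid_gen_def vertices_iff zero_fun_def)
next
  case False
  then show ?thesis using l by (simp add: tSs_def valid_gen_def zero_fun_def)
qed

lemma rep_tsum: "rep (tsum xs) f x = (\<Sum>t\<leftarrow>xs. rep t f x)"
  by (induction xs) (simp_all add: tsum_def)

lemma op_s_cmp:
  assumes l: "l \<in> paths G" and m: "m \<in> paths G" and s: "src G l = rng G m"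
  shows "op_s l (op_s m f) = op_s (cmp G l m) f"
proof
  fix x
  show "op_s l (op_s m f) x = op_s (cmp G l m) f x"
  proof (cases "inf_path x")
    case True
    then show ?thesis
      using inf_path_shift[OF True in_Nk_deg[OF l]] inf_path_cmp_iff[OF True l m s]
        shift_shift[OF True in_Nk_deg[OF l] in_Nk_deg[OF m]] deg_cmp[OF l m s]
      by (auto simp: op_s_def)
  qed (simp add: op_s_def)
qed

lemma op_s_adj_cmp:
  assumes l: "l \<in> paths G" and m: "m \<in> paths G" and s: "src G l = rng G m"
  shows "op_s_adj m (op_s_adj l f) = op_s_adj (cmp G l m) f"
proof
  fix x
  show "op_s_adj m (op_s_adj l f) x = op_s_adj (cmp G l m) f x"
  proof (cases "inf_path x \<and> x 0 = src G m")
    case True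
    then show ?thesis
      using inf_path_prepend[of x m] prepend_at_zero[of x m] prepend_prepend[of x l m] l m s src_cmp[OF l m s]
      by (auto simp: op_s_adj_def)
  qed (use src_cmp[OF l m s] in \<open>auto simp: op_s_adj_def\<close>)
qed

lemma op_s_op_s_adj:
  assumes l: "l \<in> paths G"
  shows "op_s l (op_s_adj l f) x = (if inf_path x \<and> x (deg G l) = l then f x else 0)"
  using inf_path_shift[of x "deg G l"] shift_at_zero[of x "deg G l"] prepend_shift[of x "deg G l"]
  by (auto simp: op_s_def op_s_adj_def in_Nk_deg[OF l])

lemma rep_KP4:
  assumes v: "v \<in> vertices G" and n: "in_Nk k n" and ls: "distinct ls" "set ls = vLn G v n"
  shows "rep (tP v) = rep (tsum (map (\<lambda>l. Mul (tS G l) (tSs G l)) ls))"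
proof (intro ext)
  fix f x
  have l: "l \<in> paths G" "deg G l = n" if "l \<in> set ls" for l
    using that ls by (auto simp: vLn_def)
  have "rep (tsum (map (\<lambda>l. Mul (tS G l) (tSs G l)) ls)) f x
      = (\<Sum>l\<in>set ls. if inf_path x \<and> x n = l then f x else 0)"
    using ls(1) l
    by (simp add: rep_tsum comp_def rep_tS rep_tSs op_s_op_s_adj sum_list_distinct_conv_sum_set
        cong: sum.cong)
  also have "\<dots> = (if inf_path x \<and> x n \<in> set ls then f x else 0)"
    by (cases "inf_path x") (simp_all add: sum.delta)
  also have "\<dots> = rep (tP v) f x"
    using v n ls(2) by (auto simp: rep_tP op_p_def vLn_def inf_path_in_paths deg_inf_path rng_inf_path)
  finally show "rep (tP v) f x = rep (tsum (map (\<lambda>l. Mul (tS G l) (tSs G l)) ls)) f x" ..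
qed

lemma rep_kp_eq:
  fixes a b :: "('p, 'r::comm_ring_1) kpt"
  shows "kp_eq k G a b \<Longrightarrow> rep a = rep b"
proof (induction rule: kp_eq.induct)
  case (distl a b c)
  then show ?case by (simp add: fun_eq_iff rep_add)
next
  case (smul_mul_right r a b)
  then show ?case by (simp add: fun_eq_iff rep_scale)
next
  case (KP1a v)
  then show ?case by (simp add: rep_tP fun_eq_iff op_p_def)
next
  case (KP1b v w)
  then show ?case by (simp add: rep_tP fun_eq_iff op_p_def)
next
  case (KP2a l m)
  then show ?case by (simp add: rep_tS cmp_in_paths op_s_cmp)
next
  case (KP2b l m)
  then show ?case by (simp add: rep_tSs cmp_in_paths op_s_adj_cmp)
next
  case (KP2c l)
  then show ?case
    by (auto simp: rep_tS rep_tP rng_in_vertices fun_eq_iff op_p_def op_s_def inf_path_at_zero)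
next
  case (KP2d l)
  then show ?case
    by (auto simp: rep_tS rep_tP src_in_vertices fun_eq_iff op_p_def op_s_def inf_path_shift
        shift_at_zero in_Nk_deg)
next
  case (KP2e l)
  then show ?case by (auto simp: rep_tSs rep_tP src_in_vertices fun_eq_iff op_p_def op_s_adj_def)
next
  case (KP2f l)
  then show ?case
    by (auto simp: rep_tSs rep_tP rng_in_vertices fun_eq_iff op_p_def op_s_adj_def inf_path_prepend
        prepend_at_zero)
next
  case (KP3 l m)
  show ?case
  proof (cases "l = m")
    case True
    then show ?thesis
      using KP3(1) by (auto simp: rep_tSs rep_tS rep_tP src_in_vertices fun_eq_iff op_p_def
          op_s_adj_def op_s_def inf_path_prepend prepend_at_deg shift_prepend)
  next
    case False
    have "op_s_adj l (op_s m f) x = 0" for f :: "'p ipath \<Rightarrow> 'r" and x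
      using KP3 False prepend_at_deg[of x l] by (simp add: op_s_adj_def op_s_def)
    then show ?thesis using KP3(1,2) False by (simp add: rep_tSs rep_tS fun_eq_iff)
  qed
next
  case (KP4 v n ls)
  show ?case by (rule rep_KP4[OF KP4(1,2,4,5)])
next
  case (cong_mul a a' b b')
  then show ?case by simp
qed (simp_all add: fun_eq_iff algebra_simps)

section \<open>Existence of infinite paths\<close>

definition ones :: "nat \<Rightarrow> nat" where
  "ones = (\<lambda>i. if i < k then 1 else 0)"

lemma in_Nk_ones: "in_Nk k ones"
  by (simp add: ones_def in_Nk_def)

lemma le_sum_ones: "in_Nk k n \<Longrightarrow> n \<le> (\<lambda>i. (\<Sum>j<k. n j) * ones i)"
  by (auto simp: le_fun_def ones_def in_Nk_def intro: member_le_sum)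

primrec diag_path :: "'p \<Rightarrow> nat \<Rightarrow> 'p" where
  "diag_path w 0 = w"
| "diag_path w (Suc j) = cmp G (diag_path w j) (SOME e. e \<in> vLn G (src G (diag_path w j)) ones)"

context
  fixes w :: 'p
  assumes no_sources: "no_sources k G" and w: "w \<in> vertices G"
begin

lemma diag_path:
  "diag_path w j \<in> paths G \<and> deg G (diag_path w j) = (\<lambda>i. j * ones i) \<and> rng G (diag_path w j) = w"
proof (induction j)
  case 0
  then show ?case using w vertices_iff[of w] by (simp add: vertices_def zero_fun_def)
next
  case (Suc j)
  let ?e = "SOME e. e \<in> vLn G (src G (diag_path w j)) ones"
  have "vLn G (src G (diag_path w j)) ones \<noteq> {}"
    using no_sources Suc src_in_vertices in_Nk_ones unfolding no_sources_def by blast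
  then have "?e \<in> vLn G (src G (diag_path w j)) ones" by (simp add: some_in_eq)
  then show ?case
    using Suc cmp_in_paths[of "diag_path w j" ?e] deg_cmp[of "diag_path w j" ?e] rng_cmp[of "diag_path w j" ?e]
    by (auto simp: vLn_def)
qed

lemma prefix_diag_path:
  assumes "j \<le> j'" and n: "n \<le> deg G (diag_path w j)"
  shows "prefix (diag_path w j') n = prefix (diag_path w j) n"
  using assms(1)
proof (induction j' rule: dec_induct)
  case (step j')
  let ?e = "SOME e. e \<in> vLn G (src G (diag_path w j')) ones"
  have "vLn G (src G (diag_path w j')) ones \<noteq> {}"
    using no_sources diag_path src_in_vertices in_Nk_ones unfolding no_sources_def by blast
  then have "?e \<in> vLn G (src G (diag_path w j')) ones" by (simp add: some_in_eq)
  moreover have "deg G (diag_path w j) \<le> deg G (diag_path w j')"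
    using step(1) by (simp add: diag_path le_fun_def)
  then have "n \<le> deg G (diag_path w j')" using n by (rule order_trans[rotated])
  ultimately show ?case
    using step(3) prefix_cmp[of "diag_path w j'" ?e n] diag_path by (simp add: vLn_def)
qed simp

lemma inf_path_exists: "\<exists>x. inf_path x \<and> x 0 = w"
proof -
  let ?j = "\<lambda>n. \<Sum>i<k. n i"
  have le: "in_Nk k n \<Longrightarrow> n \<le> deg G (diag_path w (?j n))" for n
    using diag_path le_sum_ones by simp
  define x where "x = (\<lambda>n. if in_Nk k n then prefix (diag_path w (?j n)) n else undefined)"
  have "inf_path x"
    unfolding inf_path_def
  proof (intro conjI allI impI)
    fix n assume "in_Nk k n"
    then show "x n \<in> paths G" "deg G (x n) = n"
      using le diag_path by (simp_all add: x_def prefix_in_paths deg_prefix)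
  next
    fix n assume "\<not> in_Nk k n"
    then show "x n = undefined" by (simp add: x_def)
  next
    fix m n assume m: "in_Nk k m" and nm: "n \<le> m"
    have "?j n \<le> ?j m" using nm by (auto simp: le_fun_def intro: sum_mono)
    moreover have "n \<le> deg G (diag_path w (?j n))" using le in_Nk_mono[OF nm m] .
    ultimately have "prefix (diag_path w (?j m)) n = prefix (diag_path w (?j n)) n"
      by (rule prefix_diag_path)
    then show "prefix (x m) n = x n"
      using m in_Nk_mono[OF nm m] prefix_prefix[OF _ nm le[OF m]] diag_path by (simp add: x_def)
  qed
  moreover have "x 0 = w"
    using w by (simp add: x_def prefix_zero vertices_def)
  ultimately show ?thesis by blast
qed

end

lemma smul_tP_not_zero:
  assumes "no_sources k G" and w: "w \<in> vertices G" and r: "(r :: 'r::comm_ring_1) \<noteq> 0"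
  shows "\<not> kp_eq k G (Smul r (tP w)) Zero"
proof
  assume "kp_eq k G (Smul r (tP w)) Zero"
  then have eq: "rep (Smul r (tP w)) = rep (Zero :: ('p, 'r) kpt)" by (rule rep_kp_eq)
  obtain x where x: "inf_path x" "x 0 = w" using inf_path_exists[OF assms(1) w] by blast
  have "r = rep (Smul r (tP w)) (\<lambda>_. 1) x" using x w by (simp add: rep_tP op_p_def)
  also have "\<dots> = rep Zero (\<lambda>_. 1) x" by (simp only: eq)
  also have "\<dots> = 0" by simp
  finally show False using r by simp
qed

abbreviation proj :: "'p \<Rightarrow> ('p, 'r::comm_ring_1) kpt" where
  "proj l \<equiv> Mul (tS G l) (tSs G l)"

lemma tSs_tS: "l \<in> paths G \<Longrightarrow> Mul (tSs G l) (tS G l) \<approx> tP (src G l)"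
  using kp_eq.KP3[of l G l k] by simp

lemma tSs_tS_eq_Zero:
  "l \<in> paths G \<Longrightarrow> m \<in> paths G \<Longrightarrow> deg G l = deg G m \<Longrightarrow> l \<noteq> m \<Longrightarrow> Mul (tSs G l) (tS G m) \<approx> Zero"
  using kp_eq.KP3[of l G m k] by simp

lemma tSs_tS_not_prefix:
  assumes \<nu>: "\<nu> \<in> paths G" and l: "l \<in> paths G" and le: "deg G \<nu> \<le> deg G l"
    and ne: "prefix l (deg G \<nu>) \<noteq> \<nu>"
  shows "Mul (tSs G \<nu>) (tS G l) \<approx> Zero"
proof -
  let ?l\<^sub>1 = "prefix l (deg G \<nu>)" and ?l\<^sub>2 = "suffix l (deg G \<nu>)"
  have l\<^sub>1\<^sub>2: "?l\<^sub>1 \<in> paths G" "?l\<^sub>2 \<in> paths G" "rng G ?l\<^sub>2 = src G ?l\<^sub>1" "deg G ?l\<^sub>1 = deg G \<nu>"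
    using l le by (simp_all add: prefix_in_paths suffix_in_paths src_prefix deg_prefix)
  have "Mul (tSs G \<nu>) (tS G l) \<approx> Mul (tSs G \<nu>) (Mul (tS G ?l\<^sub>1) (tS G ?l\<^sub>2))"
    using mul_cong_left[OF kp_eq.sym[OF kp_eq.KP2a[OF l\<^sub>1\<^sub>2(1-3)]]] l le by (simp add: cmp_prefix_suffix)
  also have "\<dots> \<approx> Mul (Mul (tSs G \<nu>) (tS G ?l\<^sub>1)) (tS G ?l\<^sub>2)"
    by (rule mul_assoc_sym)
  also have "\<dots> \<approx> Zero"
    using \<nu> l\<^sub>1\<^sub>2 ne by (intro mul_eq_Zero_if_left tSs_tS_eq_Zero) auto
  finally show ?thesis .
qed

lemma tSs_proj: "l \<in> paths G \<Longrightarrow> Mul (tSs G l) (proj l) \<approx> tSs G l"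
proof -
  assume l: "l \<in> paths G"
  have "Mul (tSs G l) (proj l) \<approx> Mul (Mul (tSs G l) (tS G l)) (tSs G l)" by (rule mul_assoc_sym)
  also have "\<dots> \<approx> Mul (tP (src G l)) (tSs G l)" by (rule mul_cong_right[OF tSs_tS[OF l]])
  also have "\<dots> \<approx> tSs G l" by (rule kp_eq.KP2e[OF l])
  finally show ?thesis .
qed

lemma tSs_cmp_tS:
  assumes \<mu>: "\<mu> \<in> paths G" and a: "a \<in> paths G" and s: "rng G a = src G \<mu>"
  shows "Mul (tSs G (cmp G \<mu> a)) (tS G \<mu>) \<approx> tSs G a"
proof -
  have "Mul (tSs G (cmp G \<mu> a)) (tS G \<mu>) \<approx> Mul (Mul (tSs G a) (tSs G \<mu>)) (tS G \<mu>)"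
    by (rule mul_cong_right[OF kp_eq.sym[OF kp_eq.KP2b[OF \<mu> a s]]])
  also have "\<dots> \<approx> Mul (tSs G a) (Mul (tSs G \<mu>) (tS G \<mu>))" by (rule kp_eq.mul_assoc)
  also have "\<dots> \<approx> Mul (tSs G a) (tP (rng G a))" using mul_cong_left[OF tSs_tS[OF \<mu>]] s by simp
  also have "\<dots> \<approx> tSs G a" by (rule kp_eq.KP2f[OF a])
  finally show ?thesis .
qed

lemma smul_tP_eq_Zero_if_smul_tSs:
  assumes l: "l \<in> paths G" and "Smul r (tSs G l) \<approx> Zero"
  shows "Smul r (tP (src G l)) \<approx> Zero"
proof -
  have "Smul r (tP (src G l)) \<approx> Smul r (Mul (tSs G l) (tS G l))"
    by (rule kp_eq.cong_smul[OF kp_eq.sym[OF tSs_tS[OF l]]])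
  also have "\<dots> \<approx> Mul (Smul r (tSs G l)) (tS G l)" by (rule kp_eq.smul_mul_left)
  also have "\<dots> \<approx> Zero" by (rule mul_eq_Zero_if_left[OF assms(2)])
  finally show ?thesis .
qed

text \<open>(KP4) extended to \<open>n = 0\<close>, where \<open>v\<Lambda>\<^sup>0 = {v}\<close>.\<close>

lemma tP_eq_tsum_proj:
  assumes v: "v \<in> vertices G" and n: "in_Nk k n" and ls: "distinct ls" "set ls = vLn G v n"
  shows "tP v \<approx> tsum (map proj ls)"
proof (cases "n = 0")
  case True
  have "vLn G v n = {v}"
    using v True by (auto simp: vLn_def vertices_iff deg_zero_rng_src)
  with ls have "ls = [v]" by (cases ls) (auto simp: insert_eq_iff subset_singleton_iff)
  have "tP v \<approx> Mul (tP v) (tP v)" by (rule kp_eq.sym[OF kp_eq.KP1a[OF v]])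
  also have "\<dots> \<approx> Add (Mul (tP v) (tP v)) Zero" by (rule kp_eq.sym[OF kp_eq.add_zero])
  finally show ?thesis
    using v \<open>ls = [v]\<close> by (simp add: tS_def tSs_def tP_def vertices_iff zero_fun_def)
next
  case False
  then show ?thesis using kp_eq.KP4[OF v n _ ls] by (simp add: zero_fun_def)
qed

lemma tS_proj_tSs:
  assumes \<mu>: "\<mu> \<in> paths G" and a: "a \<in> paths G" "rng G a = src G \<mu>"
  shows "Mul (tS G \<mu>) (Mul (proj a) (tSs G \<mu>)) \<approx> proj (cmp G \<mu> a)"
proof -
  have "Mul (tS G \<mu>) (Mul (proj a) (tSs G \<mu>)) \<approx> Mul (tS G \<mu>) (Mul (tS G a) (Mul (tSs G a) (tSs G \<mu>)))"
    by (rule mul_cong_left[OF kp_eq.mul_assoc])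
  also have "\<dots> \<approx> Mul (Mul (tS G \<mu>) (tS G a)) (Mul (tSs G a) (tSs G \<mu>))"
    by (rule mul_assoc_sym)
  also have "\<dots> \<approx> proj (cmp G \<mu> a)"
    by (rule kp_eq.cong_mul[OF kp_eq.KP2a[OF \<mu> a] kp_eq.KP2b[OF \<mu> a]])
  finally show ?thesis .
qed

lemma proj_eq_tsum_proj_cmp:
  assumes \<mu>: "\<mu> \<in> paths G" and n: "in_Nk k n" and as: "distinct as" "set as = vLn G (src G \<mu>) n"
  shows "proj \<mu> \<approx> tsum (map (\<lambda>a. proj (cmp G \<mu> a)) as)"
proof -
  let ?v = "src G \<mu>"
  have "proj \<mu> \<approx> Mul (Mul (tS G \<mu>) (tP ?v)) (tSs G \<mu>)"
    by (rule mul_cong_right[OF kp_eq.sym[OF kp_eq.KP2d[OF \<mu>]]])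
  also have "\<dots> \<approx> Mul (tS G \<mu>) (Mul (tP ?v) (tSs G \<mu>))" by (rule kp_eq.mul_assoc)
  also have "\<dots> \<approx> Mul (tS G \<mu>) (Mul (tsum (map proj as)) (tSs G \<mu>))"
    by (rule mul_cong_left[OF mul_cong_right[OF tP_eq_tsum_proj[OF src_in_vertices[OF \<mu>] n as]]])
  also have "\<dots> \<approx> Mul (tS G \<mu>) (tsum (map (\<lambda>a. Mul (proj a) (tSs G \<mu>)) as))"
    by (rule mul_cong_left[OF mul_tsum_right])
  also have "\<dots> \<approx> tsum (map (\<lambda>a. Mul (tS G \<mu>) (Mul (proj a) (tSs G \<mu>))) as)"
    by (rule mul_tsum_left)
  also have "\<dots> \<approx> tsum (map (\<lambda>a. proj (cmp G \<mu> a)) as)"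
    using as(2) by (intro tsum_cong tS_proj_tSs[OF \<mu>]) (auto simp: vLn_def)
  finally show ?thesis .
qed

lemma proj_eq_tsum_extensions:
  assumes rf: "row_finite_no_sources k G" and \<mu>: "\<mu> \<in> paths G" and n: "in_Nk k n"
  obtains ls where "distinct ls" "set ls = cmp G \<mu> ` vLn G (src G \<mu>) n"
    and "proj \<mu> \<approx> (tsum (map proj ls) :: ('p, 'r::comm_ring_1) kpt)"
proof -
  obtain as where as: "distinct as" "set as = vLn G (src G \<mu>) n"
    using rf src_in_vertices[OF \<mu>] n finite_distinct_list
    unfolding row_finite_no_sources_def by metis
  show ?thesis
  proof (rule that[of "map (cmp G \<mu>) as"])
    show "distinct (map (cmp G \<mu>) as)" using as inj_on_cmp[OF \<mu>] by (simp add: distinct_map)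
    show "set (map (cmp G \<mu>) as) = cmp G \<mu> ` vLn G (src G \<mu>) n" using as by simp
    show "proj \<mu> \<approx> tsum (map proj (map (cmp G \<mu>) as))"
      using proj_eq_tsum_proj_cmp[OF \<mu> n as] by (simp add: comp_def)
  qed
qed

lemma tSs_cmp_mul:
  assumes \<mu>: "\<mu> \<in> paths G" and \<nu>: "\<nu> \<in> paths G" and a: "a \<in> paths G"
    and s\<^sub>\<mu>: "rng G a = src G \<mu>" and s\<^sub>\<nu>: "rng G a = src G \<nu>"
  shows "Mul (tSs G (cmp G \<mu> a)) (Mul (tS G \<mu>) (tSs G \<nu>)) \<approx> tSs G (cmp G \<nu> a)"
proof -
  have "Mul (tSs G (cmp G \<mu> a)) (Mul (tS G \<mu>) (tSs G \<nu>))
      \<approx> Mul (Mul (tSs G (cmp G \<mu> a)) (tS G \<mu>)) (tSs G \<nu>)"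
    by (rule mul_assoc_sym)
  also have "\<dots> \<approx> Mul (tSs G a) (tSs G \<nu>)" by (rule mul_cong_right[OF tSs_cmp_tS[OF \<mu> a s\<^sub>\<mu>]])
  also have "\<dots> \<approx> tSs G (cmp G \<nu> a)" by (rule kp_eq.KP2b[OF \<nu> a s\<^sub>\<nu>])
  finally show ?thesis .
qed

lemma prefix_eq_if_in_commutant:
  fixes r :: "'r::comm_ring_1"
  assumes ns: "no_sources k G" and \<mu>: "\<mu> \<in> paths G" and \<nu>: "\<nu> \<in> paths G"
    and s: "src G \<mu> = src G \<nu>" and r: "r \<noteq> 0"
    and comm: "kp_in_D' k G (Smul r (Mul (tS G \<mu>) (tSs G \<nu>)))"
    and a: "a \<in> paths G" "rng G a = src G \<mu>" and le: "deg G \<nu> \<le> deg G (cmp G \<mu> a)"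
  shows "prefix (cmp G \<mu> a) (deg G \<nu>) = \<nu>"
proof (rule ccontr)
  assume ne: "prefix (cmp G \<mu> a) (deg G \<nu>) \<noteq> \<nu>"
  let ?x = "Smul r (Mul (tS G \<mu>) (tSs G \<nu>))" and ?l = "cmp G \<mu> a"
  have l: "?l \<in> paths G" using cmp_in_paths[OF \<mu> a(1) a(2)[symmetric]] .
  have "Mul ?x (proj ?l) \<approx> Smul r (Mul (Mul (tS G \<mu>) (tSs G \<nu>)) (proj ?l))"
    by (rule mul_smul_left)
  also have "\<dots> \<approx> Smul r (Mul (tS G \<mu>) (Mul (tSs G \<nu>) (proj ?l)))"
    by (rule kp_eq.cong_smul[OF kp_eq.mul_assoc])
  also have "\<dots> \<approx> Smul r (Mul (tS G \<mu>) (Mul (Mul (tSs G \<nu>) (tS G ?l)) (tSs G ?l)))"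
    by (rule kp_eq.cong_smul[OF mul_cong_left[OF mul_assoc_sym]])
  also have "\<dots> \<approx> Zero"
    by (rule smul_eq_Zero[OF mul_eq_Zero_if_right[OF mul_eq_Zero_if_left[OF tSs_tS_not_prefix[OF \<nu> l le ne]]]])
  finally have "Mul (proj ?l) ?x \<approx> Zero"
    using comm kp_D.gen[OF l] unfolding kp_in_D'_def by (blast intro: kp_eq.trans kp_eq.sym)
  have "Smul r (tSs G (cmp G \<nu> a)) \<approx> Smul r (Mul (tSs G ?l) (Mul (tS G \<mu>) (tSs G \<nu>)))"
    using a s by (intro kp_eq.cong_smul kp_eq.sym[OF tSs_cmp_mul[OF \<mu> \<nu>]]) simp_all
  also have "\<dots> \<approx> Mul (tSs G ?l) ?x" by (rule kp_eq.sym[OF mul_smul_right])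
  also have "\<dots> \<approx> Mul (Mul (tSs G ?l) (proj ?l)) ?x" by (rule mul_cong_right[OF kp_eq.sym[OF tSs_proj[OF l]]])
  also have "\<dots> \<approx> Mul (tSs G ?l) (Mul (proj ?l) ?x)" by (rule kp_eq.mul_assoc)
  also have "\<dots> \<approx> Zero" by (rule mul_eq_Zero_if_right) fact
  finally have "Smul r (tP (src G (cmp G \<nu> a))) \<approx> Zero"
    using a s by (intro smul_tP_eq_Zero_if_smul_tSs cmp_in_paths[OF \<nu>]) simp_all
  then show False
    using smul_tP_not_zero[OF ns _ r] src_in_vertices cmp_in_paths[OF \<nu> a(1)] a(2) s by simp
qed

lemma extension_mem_extensions:
  assumes \<mu>: "\<mu> \<in> paths G" and \<nu>: "\<nu> \<in> paths G" and le: "deg G \<mu> \<le> m" "deg G \<nu> \<le> m"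
    and a: "a \<in> vLn G (src G \<mu>) (m - deg G \<mu>)" and pre: "prefix (cmp G \<mu> a) (deg G \<nu>) = \<nu>"
  shows "cmp G \<mu> a \<in> cmp G \<nu> ` vLn G (src G \<nu>) (m - deg G \<nu>)"
proof -
  let ?l = "cmp G \<mu> a"
  have l: "?l \<in> paths G" "deg G ?l = m"
    using a \<mu> le by (auto simp: vLn_def cmp_in_paths deg_cmp le_add_diff_inverse_fun)
  then have "?l = cmp G \<nu> (suffix ?l (deg G \<nu>))" "suffix ?l (deg G \<nu>) \<in> vLn G (src G \<nu>) (m - deg G \<nu>)"
    using pre le cmp_prefix_suffix[OF l(1)] src_prefix[OF l(1)] suffix_in_paths[OF l(1)] deg_suffix[OF l(1)]
    by (force simp: vLn_def)+
  then show ?thesis by blast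
qed

lemma extensions_subset_if_in_commutant:
  fixes r :: "'r::comm_ring_1"
  assumes ns: "no_sources k G" and \<mu>: "\<mu> \<in> paths G" and \<nu>: "\<nu> \<in> paths G"
    and s: "src G \<mu> = src G \<nu>" and r: "r \<noteq> 0"
    and comm: "kp_in_D' k G (Smul r (Mul (tS G \<mu>) (tSs G \<nu>)))"
    and le: "deg G \<mu> \<le> m" "deg G \<nu> \<le> m"
  shows "cmp G \<mu> ` vLn G (src G \<mu>) (m - deg G \<mu>) \<subseteq> cmp G \<nu> ` vLn G (src G \<nu>) (m - deg G \<nu>)"
proof
  fix l assume "l \<in> cmp G \<mu> ` vLn G (src G \<mu>) (m - deg G \<mu>)"
  then obtain a where a: "a \<in> vLn G (src G \<mu>) (m - deg G \<mu>)" and l: "l = cmp G \<mu> a" by blast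
  then have "deg G \<nu> \<le> deg G (cmp G \<mu> a)"
    using \<mu> le by (auto simp: vLn_def deg_cmp le_add_diff_inverse_fun)
  then have "prefix (cmp G \<mu> a) (deg G \<nu>) = \<nu>"
    using a by (intro prefix_eq_if_in_commutant[OF ns \<mu> \<nu> s r comm]) (auto simp: vLn_def)
  then show "l \<in> cmp G \<nu> ` vLn G (src G \<nu>) (m - deg G \<nu>)"
    unfolding l by (rule extension_mem_extensions[OF \<mu> \<nu> le a])
qed

lemma proj_eq_if_in_commutant:
  fixes r :: "'r::comm_ring_1"
  assumes rf: "row_finite_no_sources k G" and \<mu>: "\<mu> \<in> paths G" and \<nu>: "\<nu> \<in> paths G"
    and s: "src G \<mu> = src G \<nu>" and r: "r \<noteq> 0"
    and comm: "kp_in_D' k G (Smul r (Mul (tS G \<mu>) (tSs G \<nu>)))"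
  shows "proj \<mu> \<approx> (proj \<nu> :: ('p, 's::comm_ring_1) kpt)"
proof -
  note ns = no_sources_if_row_finite[OF rf]
  define m where "m = sup (deg G \<mu>) (deg G \<nu>)"
  have m: "in_Nk k m" "deg G \<mu> \<le> m" "deg G \<nu> \<le> m"
    using \<mu> \<nu> by (simp_all add: m_def in_Nk_sup in_Nk_deg)
  have "kp_in_D' k G (Smul r (Mul (tS G \<nu>) (tSs G \<mu>)))"
    using kp_in_D'_adj[OF comm] by simp
  then have ext: "cmp G \<mu> ` vLn G (src G \<mu>) (m - deg G \<mu>) = cmp G \<nu> ` vLn G (src G \<nu>) (m - deg G \<nu>)"
    using extensions_subset_if_in_commutant[OF ns \<mu> \<nu> s r comm m(2,3)]
      extensions_subset_if_in_commutant[OF ns \<nu> \<mu> s[symmetric] r _ m(3,2)]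
    by blast
  obtain ls\<^sub>\<mu> where ls\<^sub>\<mu>: "distinct ls\<^sub>\<mu>" "set ls\<^sub>\<mu> = cmp G \<mu> ` vLn G (src G \<mu>) (m - deg G \<mu>)"
    and "proj \<mu> \<approx> (tsum (map proj ls\<^sub>\<mu>) :: ('p, 's) kpt)"
    using proj_eq_tsum_extensions[OF rf \<mu> in_Nk_diff[OF m(1)]] by blast
  obtain ls\<^sub>\<nu> where ls\<^sub>\<nu>: "distinct ls\<^sub>\<nu>" "set ls\<^sub>\<nu> = cmp G \<nu> ` vLn G (src G \<nu>) (m - deg G \<nu>)"
    and "proj \<nu> \<approx> (tsum (map proj ls\<^sub>\<nu>) :: ('p, 's) kpt)"
    using proj_eq_tsum_extensions[OF rf \<nu> in_Nk_diff[OF m(1)]] by blast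
  have "proj \<mu> \<approx> (tsum (map proj ls\<^sub>\<mu>) :: ('p, 's) kpt)" by fact
  also have "\<dots> \<approx> tsum (map proj ls\<^sub>\<nu>)" using ls\<^sub>\<mu> ls\<^sub>\<nu> ext by (intro tsum_perm) simp_all
  also have "\<dots> \<approx> proj \<nu>" by (rule kp_eq.sym) fact
  finally show ?thesis .
qed

end

theorem lemma4p8:
  fixes k :: nat and G :: "'p kgraph" and \<mu> \<nu> :: 'p and r :: "'r::comm_ring_1"
  assumes "is_kgraph k G"
    and "row_finite_no_sources k G"
    and "\<mu> \<in> paths G" and "\<nu> \<in> paths G"
    and "src G \<mu> = src G \<nu>"
    and "r \<noteq> 0"
    and "kp_in_D' k G (Smul r (Mul (tS G \<mu>) (tSs G \<nu>)))"
  shows "kp_eq k G (Mul (tS G \<mu>) (tSs G \<mu>)) (Mul (tS G \<nu>) (tSs G \<nu>))"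
proof -
  interpret kgraph k G by unfold_locales fact
  show ?thesis by (rule proj_eq_if_in_commutant[OF assms(2-7)])
qed

end
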